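(* For every integer $n>2$, $\delta(n) < n/2$.
   Context: A double-$n$ string is a string of length $2n$ over an alphabet of $n$ symbols in which each symbol appears exactly twice. Positions in the string are numbered $1,\dots,2n$. The distance between two distinct symbols is the minimum, over an occurrence of the first symbol and an occurrence of the second, of the absolute difference of their positions (so adjacent entries have distance $1$). The diameter of a double-$n$ string ($n\ge 2$) is the maximum of the distance over all pairs of distinct symbols. $\delta(n)$ denotes the minimum diameter over all double-$n$ strings. *)

theory Defs
  imports Main
begin

(* A double-n string: a word of length 2n over the alphabet {0..<n}
   in which every symbol occurs exactly twice.  Positions are list
   indices 0..2n-1 (shifting from 1..2n does not change distances). *)
definition double_string :: "nat \<Rightarrow> nat list \<Rightarrow> bool" where
  "double_string n w \<longleftrightarrow> length w = 2 * n \<and> set w \<subseteq> {0..<n}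
     \<and> (\<forall>a\<in>{0..<n}. count_list w a = 2)"

definition sdist :: "nat list \<Rightarrow> nat \<Rightarrow> nat \<Rightarrow> nat" where
  "sdist w a b = Min {nat \<bar>int i - int j\<bar> | i j. i < length w \<and> j < length w
                        \<and> w ! i = a \<and> w ! j = b}"

definition diameter :: "nat \<Rightarrow> nat list \<Rightarrow> nat" where
  "diameter n w = Max {sdist w a b | a b. a < n \<and> b < n \<and> a \<noteq> b}"

definition delta :: "nat \<Rightarrow> nat" where
  "delta n = Min {diameter n w | w. double_string n w}"

end

theory Submission
  imports Defs
begin

text \<open>Let \<open>m = n div 2\<close> and \<open>d = (n - 1) div 2\<close>, so that \<open>2 d < n\<close>. The string
  \<open>0 1 \<dots> (n-1)\<close> followed by \<open>0 \<dots> (m-2) m \<dots> (n-2) (m-1) (n-1)\<close> has diameter at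
  most \<open>d\<close>. Let \<open>a < b\<close> be more than \<open>d\<close> apart in the first half. Then \<open>a = m - 1\<close>
  and \<open>b = n - 1\<close>, whose second occurrences are adjacent, or \<open>a < m - 1\<close>, and the second
  occurrence of \<open>a\<close>, at position \<open>n + a\<close>, lies within \<open>d\<close> of the first occurrence of
  \<open>b\<close>. The only exception, \<open>b - a = d + 1\<close> for even \<open>n\<close>, is rescued by the shift of
  the symbols above \<open>m - 1\<close> one step to the left in the second half.\<close>

lemma sdist_le_index_dist:
  assumes "i < length w" "j < length w" "w ! i = a" "w ! j = b"
  shows "sdist w a b \<le> nat \<bar>int i - int j\<bar>"
proof -
  let ?S = "{nat \<bar>int i - int j\<bar> | i j. i < length w \<and> j < length w \<and> w ! i = a \<and> w ! j = b}"
  have "?S \<subseteq> (\<lambda>(i, j). nat \<bar>int i - int j\<bar>) ` ({..<length w} \<times> {..<length w})"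
    by auto
  then have "finite ?S"
    by (rule finite_subset) auto
  moreover have "nat \<bar>int i - int j\<bar> \<in> ?S"
    using assms by blast
  ultimately show ?thesis
    unfolding sdist_def by (rule Min_le)
qed

lemma diameter_le:
  assumes "2 \<le> n" and "\<And>a b. a < n \<Longrightarrow> b < n \<Longrightarrow> a \<noteq> b \<Longrightarrow> sdist w a b \<le> d"
  shows "diameter n w \<le> d"
proof -
  let ?T = "{sdist w a b | a b. a < n \<and> b < n \<and> a \<noteq> b}"
  have "?T \<subseteq> (\<lambda>(a, b). sdist w a b) ` ({..<n} \<times> {..<n})"
    by auto
  then have "finite ?T"
    by (rule finite_subset) auto
  moreover have "sdist w 0 1 \<in> ?T"
    using assms(1) by (intro CollectI exI[of _ 0] exI[of _ 1]) auto
  ultimately show ?thesis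
    unfolding diameter_def using assms(2) by (subst Max_le_iff) auto
qed

lemma delta_le_diameter:
  assumes "double_string n w"
  shows "delta n \<le> diameter n w"
proof -
  let ?U = "{diameter n w | w. double_string n w}"
  have "?U \<subseteq> diameter n ` {w. set w \<subseteq> {0..<n} \<and> length w = 2 * n}"
    by (auto simp: double_string_def)
  then have "finite ?U"
    by (rule finite_subset) (simp add: finite_lists_length_eq)
  then show ?thesis
    unfolding delta_def using assms by (blast intro: Min_le)
qed

definition second_half :: "nat \<Rightarrow> nat \<Rightarrow> nat list" where
  "second_half n m = [0..<m - 1] @ [m..<n - 1] @ [m - 1, n - 1]"

definition witness_string :: "nat \<Rightarrow> nat \<Rightarrow> nat list" where
  "witness_string n m = [0..<n] @ second_half n m"

definition second_pos :: "nat \<Rightarrow> nat \<Rightarrow> nat \<Rightarrow> nat" where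
  "second_pos n m x = n +
     (if x < m - 1 then x else if x = m - 1 then n - 2 else if x < n - 1 then x - 1 else n - 1)"

lemma count_list_upt: "count_list [i..<j] x = (if i \<le> x \<and> x < j then 1 else 0)"
  by (induction j) auto

lemma double_string_witness_string:
  assumes "1 \<le> m" "m < n - 1"
  shows "double_string n (witness_string n m)"
  using assms by (auto simp: double_string_def witness_string_def second_half_def count_list_upt)

lemma second_half_nth_second_pos:
  assumes "1 \<le> m" "m < n - 1" "x < n"
  shows "second_half n m ! (second_pos n m x - n) = x"
proof -
  consider "x < m - 1" | "x = m - 1" | "m - 1 < x \<and> x < n - 1" | "x = n - 1"
    using assms by linarith
  then show ?thesis
  proof cases
    case 1
    then show ?thesis by (simp add: second_pos_def second_half_def nth_append)
  next
    case 2
    then have "second_pos n m x - n = length ([0..<m - 1] @ [m..<n - 1])"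
      using assms by (simp add: second_pos_def)
    then show ?thesis
      using 2 unfolding second_half_def by (simp only: append_assoc[symmetric] nth_append_length)
  next
    case 3
    then show ?thesis
      using assms by (simp add: second_pos_def second_half_def nth_append; linarith)
  next
    case 4
    then have "second_pos n m x - n = length ([0..<m - 1] @ [m..<n - 1]) + 1"
      using assms by (simp add: second_pos_def; linarith)
    then show ?thesis
      using 4 unfolding second_half_def
      by (simp only: append_assoc[symmetric] nth_append_length_plus) (simp; linarith)
  qed
qed

lemma witness_string_occurrences:
  assumes "1 \<le> m" "m < n - 1" "x < n"
  shows "witness_string n m ! x = x"
    and "witness_string n m ! second_pos n m x = x"
    and "second_pos n m x < 2 * n"
proof -
  show "witness_string n m ! x = x"
    using assms by (simp add: witness_string_def nth_append)
  show "second_pos n m x < 2 * n"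
    using assms by (simp add: second_pos_def; linarith)
  have "n \<le> second_pos n m x"
    by (simp add: second_pos_def)
  then show "witness_string n m ! second_pos n m x = x"
    using second_half_nth_second_pos[OF assms] by (simp add: witness_string_def nth_append)
qed

lemma witness_occurrences_close:
  assumes nd: "n = 2 * d + 1 \<and> m = d \<or> n = 2 * d + 2 \<and> m = d + 1"
    and "0 < d" "a < b" "b < n"
  shows "\<exists>i\<in>{a, second_pos n m a}. \<exists>j\<in>{b, second_pos n m b}. i \<le> j + d \<and> j \<le> i + d"
proof (cases "b \<le> a + d")
  case True
  then have "a \<le> b + d \<and> b \<le> a + d"
    using assms(3) by linarith
  then show ?thesis
    by blast
next
  case far: False
  consider (last) "b = n - 1" "a < m - 1" | (both_moved) "b = n - 1" "a = m - 1"
    | (gap) "b < n - 1" "a < m - 1" "b = a + d + 1" "n = 2 * d + 2"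
    | (wide_gap) "b < n - 1" "a < m - 1" "b \<noteq> a + d + 1 \<or> n = 2 * d + 1"
    using far assms(3,4) nd by linarith
  then show ?thesis
  proof cases
    case last
    then have "second_pos n m a = n + a"
      by (simp add: second_pos_def)
    then have "second_pos n m a \<le> b + d \<and> b \<le> second_pos n m a + d"
      using last nd by linarith
    then show ?thesis
      by blast
  next
    case both_moved
    then have "second_pos n m a = 2 * n - 2" "second_pos n m b = 2 * n - 1"
      using nd assms(2) by (auto simp: second_pos_def)
    then have "second_pos n m a \<le> second_pos n m b + d \<and> second_pos n m b \<le> second_pos n m a + d"
      using nd assms(2) by linarith
    then show ?thesis
      by blast
  next
    case gap
    then have "second_pos n m a = n + a" "second_pos n m b = n + b - 1"
      using nd by (auto simp: second_pos_def)
    then have "second_pos n m a \<le> second_pos n m b + d \<and> second_pos n m b \<le> second_pos n m a + d"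
      using gap by linarith
    then show ?thesis
      by blast
  next
    case wide_gap
    then have "second_pos n m a = n + a"
      by (simp add: second_pos_def)
    then have "second_pos n m a \<le> b + d \<and> b \<le> second_pos n m a + d"
      using wide_gap far nd assms(4) by linarith
    then show ?thesis
      by blast
  qed
qed

lemma sdist_witness_string_le:
  assumes nd: "n = 2 * d + 1 \<and> m = d \<or> n = 2 * d + 2 \<and> m = d + 1"
    and "0 < d" "a < n" "b < n" "a \<noteq> b"
  shows "sdist (witness_string n m) a b \<le> d"
proof -
  let ?w = "witness_string n m"
  have m: "1 \<le> m" "m < n - 1"
    using nd assms(2) by auto
  have "\<exists>i\<in>{a, second_pos n m a}. \<exists>j\<in>{b, second_pos n m b}. i \<le> j + d \<and> j \<le> i + d"
  proof (cases "a < b")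
    case True
    then show ?thesis
      by (rule witness_occurrences_close[OF nd assms(2) _ assms(4)])
  next
    case False
    then have "b < a"
      using assms(5) by simp
    then show ?thesis
      using witness_occurrences_close[OF nd assms(2) _ assms(3)] by blast
  qed
  then obtain i j where ij: "i \<in> {a, second_pos n m a}" "j \<in> {b, second_pos n m b}"
    and close: "i \<le> j + d" "j \<le> i + d"
    by blast
  have "length ?w = 2 * n"
    using double_string_witness_string[OF m] by (simp add: double_string_def)
  moreover have "i < 2 * n" "?w ! i = a"
    using ij witness_string_occurrences[OF m assms(3)] assms(3) by auto
  moreover have "j < 2 * n" "?w ! j = b"
    using ij witness_string_occurrences[OF m assms(4)] assms(4) by auto
  ultimately have "sdist ?w a b \<le> nat \<bar>int i - int j\<bar>"
    by (intro sdist_le_index_dist) simp_all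
  also have "\<dots> \<le> d"
    using close by linarith
  finally show ?thesis .
qed

theorem lemma3p1:
  fixes n :: nat
  assumes "n > 2"
  shows "2 * delta n < n"
proof -
  define d where "d = (n - 1) div 2"
  define m where "m = n div 2"
  have nd: "n = 2 * d + 1 \<and> m = d \<or> n = 2 * d + 2 \<and> m = d + 1" and "0 < d"
    using assms unfolding d_def m_def by auto
  then have "1 \<le> m" "m < n - 1"
    by auto
  then have "delta n \<le> diameter n (witness_string n m)"
    by (intro delta_le_diameter double_string_witness_string)
  also have "\<dots> \<le> d"
    using assms nd \<open>0 < d\<close> by (intro diameter_le sdist_witness_string_le) auto
  finally show ?thesis
    using nd by linarith
qed

end
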